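(* For every integer $n\ge 1$ and every positive divisor $k$ of $n$, $F_{n,k}=1$.
   Context: Define maps $G,S:\mathbb Z^2\to\mathbb Z^2$ by $G(x,y)=(x+y,y)$ and $S(x,y)=(3x-2y+1,\,2x-y+1)$. Define the array $(F_{n,k})_{n,k\ge 0}$ by $F_{0,0}=1$ and, for $(n,k)\neq(0,0)$, $F_{n,k}$ is the number of finite words $w=w_1w_2\cdots w_m$ ($m\ge 0$) over the alphabet $\{G,S\}$ with $w_1\circ w_2\circ\cdots\circ w_m(1,1)=(n,k)$ (the empty word acts as the identity). Equivalently: start with all entries $0$, set $F_{0,0}=1$ and $F_{1,1}=1$, and thereafter, whenever an entry $F_{n,k}$ with $n\ge 1$ changes its value, increase $F_{n+k,k}$ and $F_{3n+1-2k,\,2n+1-k}$ by $1$. *)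

theory Defs
  imports Main
begin

datatype letter = LG | LS

fun act :: "letter \<Rightarrow> int \<times> int \<Rightarrow> int \<times> int" where
  "act LG (x, y) = (x + y, y)"
| "act LS (x, y) = (3*x - 2*y + 1, 2*x - y + 1)"

definition word_eval :: "letter list \<Rightarrow> int \<times> int \<Rightarrow> int \<times> int" where
  "word_eval w p = foldr act w p"

definition F :: "nat \<Rightarrow> nat \<Rightarrow> nat" where
  "F n k = (if n = 0 \<and> k = 0 then 1
            else card {w. word_eval w (1, 1) = (int n, int k)})"

end

theory Submission
  imports Defs
begin

text \<open>Every point reached from (1, 1) lies in the cone 1 \<le> y \<le> x. On this cone G lands in the
  region x \<ge> 2y and S in the region x < 2y, neither reaches (1, 1), and both maps are injective.
  Hence the last letter and the predecessor of a reached point are determined by the point, so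
  each point is reached by at most one word. For n = m k the word G^(m-1) S^(k-1) reaches (n, k):
  S^(k-1) moves (1, 1) to (k, k), and each G adds k to the first coordinate.\<close>

lemma word_eval_Nil [simp]: "word_eval [] p = p"
  by (simp add: word_eval_def)

lemma word_eval_Cons [simp]: "word_eval (a # w) p = act a (word_eval w p)"
  by (simp add: word_eval_def)

lemma word_eval_append: "word_eval (u @ v) p = word_eval u (word_eval v p)"
  by (simp add: word_eval_def)

lemma inj_act: "inj (act a)"
  by (rule injI) (cases a; auto)

definition cone :: "(int \<times> int) set" where
  "cone = {(x, y). 1 \<le> y \<and> y \<le> x}"

lemma act_in_cone: "p \<in> cone \<Longrightarrow> act a p \<in> cone"
  by (cases a; cases p) (auto simp: cone_def)

lemma word_eval_in_cone: "p \<in> cone \<Longrightarrow> word_eval w p \<in> cone"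
  by (induction w) (auto intro: act_in_cone)

lemma act_eq_LG_iff:
  assumes "p \<in> cone" and "act a p = (x, y)"
  shows "a = LG \<longleftrightarrow> 2 * y \<le> x"
  using assms by (cases a; cases p) (auto simp: cone_def)

lemma act_letter_unique:
  assumes "p \<in> cone" and "q \<in> cone" and "act a p = act b q"
  shows "a = b"
proof -
  obtain x y where xy: "act a p = (x, y)" by fastforce
  with assms have "act b q = (x, y)" by simp
  with act_eq_LG_iff[OF assms(1) xy] act_eq_LG_iff[OF assms(2)] show "a = b"
    by (cases a; cases b) auto
qed

lemma act_ne_start: "p \<in> cone \<Longrightarrow> act a p \<noteq> (1, 1)"
  by (cases a; cases p) (auto simp: cone_def)

lemma start_in_cone: "(1, 1) \<in> cone"
  by (simp add: cone_def)

lemma word_eval_Cons_ne_start: "word_eval (a # w) (1, 1) \<noteq> (1, 1)"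
  using act_ne_start[OF word_eval_in_cone[OF start_in_cone]] by simp

lemma word_eval_start_inj:
  "word_eval w (1, 1) = word_eval w' (1, 1) \<Longrightarrow> w = w'"
proof (induction w arbitrary: w')
  case Nil
  then show ?case
    by (cases w') (metis word_eval_Cons_ne_start word_eval_Nil)+
next
  case (Cons a w)
  show ?case
  proof (cases w')
    case Nil
    with Cons.prems show ?thesis
      by (metis word_eval_Cons_ne_start word_eval_Nil)
  next
    case (Cons b u)
    let ?p = "word_eval w (1, 1)" and ?q = "word_eval u (1, 1)"
    have eq: "act a ?p = act b ?q"
      using Cons.prems Cons by simp
    have "a = b"
      using act_letter_unique[OF _ _ eq] word_eval_in_cone[OF start_in_cone] by blast
    moreover have "w = u"
      using eq inj_act[THEN injD] Cons.IH \<open>a = b\<close> by blast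
    ultimately show ?thesis
      using Cons by simp
  qed
qed

lemma word_eval_replicate_LS: "word_eval (replicate j LS) (1, 1) = (1 + int j, 1 + int j)"
  by (induction j) auto

lemma word_eval_replicate_LG: "word_eval (replicate i LG) (x, y) = (x + int i * y, y)"
  by (induction i) (auto simp: algebra_simps)

lemma word_eval_multiple:
  assumes "0 < m" and "0 < k"
  shows "word_eval (replicate (m - 1) LG @ replicate (k - 1) LS) (1, 1) = (int (m * k), int k)"
proof -
  have "word_eval (replicate (m - 1) LG @ replicate (k - 1) LS) (1, 1)
      = (int k + int (m - 1) * int k, int k)"
    using assms by (simp add: word_eval_append word_eval_replicate_LS word_eval_replicate_LG of_nat_diff)
  also have "\<dots> = (int (m * k), int k)"
    using assms by (simp add: of_nat_diff algebra_simps)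
  finally show ?thesis .
qed

lemma F_eq_1_if_reached:
  assumes "n \<noteq> 0" and "word_eval w (1, 1) = (int n, int k)"
  shows "F n k = 1"
proof -
  have "{w. word_eval w (1, 1) = (int n, int k)} = {w}"
    using assms(2) word_eval_start_inj by auto
  with assms(1) show ?thesis
    by (simp add: F_def)
qed

theorem proposition7:
  fixes n k :: nat
  assumes "n \<ge> 1" and "k > 0" and "k dvd n"
  shows "F n k = 1"
proof -
  obtain m where n: "n = m * k"
    using assms(3) by (metis dvdE mult.commute)
  with assms(1) have "0 < m"
    by (cases m) auto
  show ?thesis
    using F_eq_1_if_reached word_eval_multiple[OF \<open>0 < m\<close> assms(2)] assms(1) n by simp
qed

end
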